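(* Let $G$ and $H$ be graphs with $|V(G)|=4$ and $|V(H)|=3$. Then the join $G+H$ is not of class $\mathcal C_0$.
   Context: All graphs are finite, simple and undirected. The join $G+H$ is obtained from vertex-disjoint copies of $G$ and $H$ by adding all edges between $V(G)$ and $V(H)$. A drawing is 1-planar if each edge is crossed at most once (adjacent edges never cross, no edge crosses itself); a graph is 1-planar if it has such a drawing. For a 1-planar drawing $D$, $D^\times$ is the plane graph obtained by turning each crossing into a new degree-4 vertex (a false vertex); $N_{D^\times}(c)$ is the neighbour set of a false vertex $c$. A 1-planar graph is of class $\mathcal C_0$ if it has a 1-planar drawing $D$ with $|N_{D^\times}(c_1)\cap N_{D^\times}(c_2)|=0$ for all distinct false vertices $c_1,c_2$. *)

theory Defs
  imports "HOL-Analysis.Analysis"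
begin

definition simple_graph :: "'a set \<Rightarrow> 'a set set \<Rightarrow> bool" where
  "simple_graph V E \<longleftrightarrow> finite V \<and> (\<forall>e\<in>E. e \<subseteq> V \<and> card e = 2)"

definition join_V :: "'a set \<Rightarrow> 'b set \<Rightarrow> ('a + 'b) set" where
  "join_V VG VH = Inl ` VG \<union> Inr ` VH"

definition join_E :: "'a set \<Rightarrow> 'a set set \<Rightarrow> 'b set \<Rightarrow> 'b set set \<Rightarrow> ('a + 'b) set set" where
  "join_E VG EG VH EH =
     ((`) Inl) ` EG \<union> ((`) Inr) ` EH \<union> {{Inl x, Inr y} | x y. x \<in> VG \<and> y \<in> VH}"

definition edge_int :: "('a set \<Rightarrow> real \<Rightarrow> complex) \<Rightarrow> 'a set \<Rightarrow> complex set" where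
  "edge_int \<Gamma> e = \<Gamma> e ` {0<..<1}"

definition drawing :: "'a set \<Rightarrow> 'a set set \<Rightarrow> ('a \<Rightarrow> complex) \<Rightarrow> ('a set \<Rightarrow> real \<Rightarrow> complex) \<Rightarrow> bool" where
  "drawing V E pos \<Gamma> \<longleftrightarrow> inj_on pos V \<and>
     (\<forall>e\<in>E. arc (\<Gamma> e) \<and> {pathstart (\<Gamma> e), pathfinish (\<Gamma> e)} = pos ` e \<and>
             (\<forall>v\<in>V. pos v \<notin> edge_int \<Gamma> e))"

definition crossings_on :: "'a set set \<Rightarrow> ('a set \<Rightarrow> real \<Rightarrow> complex) \<Rightarrow> 'a set \<Rightarrow> ('a set \<times> complex) set" where
  "crossings_on E \<Gamma> e = {(f, p). f \<in> E \<and> f \<noteq> e \<and> p \<in> edge_int \<Gamma> e \<inter> edge_int \<Gamma> f}"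

definition crosses :: "('a set \<Rightarrow> real \<Rightarrow> complex) \<Rightarrow> 'a set \<Rightarrow> 'a set \<Rightarrow> bool" where
  "crosses \<Gamma> e f \<longleftrightarrow> e \<noteq> f \<and> edge_int \<Gamma> e \<inter> edge_int \<Gamma> f \<noteq> {}"

definition one_planar_drawing :: "'a set \<Rightarrow> 'a set set \<Rightarrow> ('a \<Rightarrow> complex) \<Rightarrow> ('a set \<Rightarrow> real \<Rightarrow> complex) \<Rightarrow> bool" where
  "one_planar_drawing V E pos \<Gamma> \<longleftrightarrow> drawing V E pos \<Gamma> \<and>
     (\<forall>e\<in>E. \<forall>f\<in>E. e \<noteq> f \<and> e \<inter> f \<noteq> {} \<longrightarrow> \<not> crosses \<Gamma> e f) \<and>
     (\<forall>e\<in>E. finite (crossings_on E \<Gamma> e) \<and> card (crossings_on E \<Gamma> e) \<le> 1)"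

text \<open>Class C_0: in D^x a false vertex arising from crossing edges e, f has neighbourhood
  e \<union> f (the four end vertices), since each edge is crossed at most once; distinct
  false vertices correspond to distinct crossing pairs {e,f}.\<close>
definition class_C0 :: "'a set \<Rightarrow> 'a set set \<Rightarrow> bool" where
  "class_C0 V E \<longleftrightarrow> (\<exists>pos \<Gamma>. one_planar_drawing V E pos \<Gamma> \<and>
     (\<forall>e1\<in>E. \<forall>f1\<in>E. \<forall>e2\<in>E. \<forall>f2\<in>E.
        crosses \<Gamma> e1 f1 \<and> crosses \<Gamma> e2 f2 \<and> {e1, f1} \<noteq> {e2, f2} \<longrightarrow>
        (e1 \<union> f1) \<inter> (e2 \<union> f2) = {}))"

end

theory Submission
  imports Defs
begin

(* A drawing witnessing class C_0 has pairwise vertex-disjoint crossing pairs, and crossing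
   edges are never adjacent.  So a crossing between two edges joining V(G) to V(H) uses two
   vertices of H, and two different such crossings would need four.  Hence all these crossings
   pass through one vertex of G, and deleting it leaves a drawing of K_{3,3} without crossings.
   That contradicts the Jordan curve theorem: the paths from a0 to a1 through b0, b1, b2 form a
   theta curve, and a2 cannot reach interior points of all three of its arcs from within one of
   the three faces. *)

lemma connected_disjoint_subset_inside:
  assumes "connected C" "C \<inter> S = {}" "C \<inter> inside S \<noteq> {}"
  shows "C \<subseteq> inside S"
  using assms inside_outside_intersect_connected[of C S] inside_Un_outside[of S] by blast

lemma connected_disjoint_subset_outside:
  assumes "connected C" "C \<inter> S = {}" "C \<inter> outside S \<noteq> {}"
  shows "C \<subseteq> outside S"
  using assms inside_outside_intersect_connected[of C S] inside_Un_outside[of S] by blast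

lemma pathfinish_in_Un_inside:
  assumes "path g" "path_image g \<inter> S \<subseteq> {pathfinish g}" "pathstart g \<in> inside S"
  shows "pathfinish g \<in> S \<union> inside S"
proof (cases "pathfinish g \<in> S")
  case False
  with assms(2) have "path_image g \<inter> S = {}" by blast
  moreover have "path_image g \<inter> inside S \<noteq> {}"
    using assms(3) pathstart_in_path_image by blast
  ultimately have "path_image g \<subseteq> inside S"
    using connected_disjoint_subset_inside connected_path_image[OF assms(1)] by blast
  then show ?thesis using pathfinish_in_path_image by blast
qed simp

lemma pathfinish_in_Un_outside:
  assumes "path g" "path_image g \<inter> S \<subseteq> {pathfinish g}" "pathstart g \<in> outside S"
  shows "pathfinish g \<in> S \<union> outside S"
proof (cases "pathfinish g \<in> S")
  case False
  with assms(2) have "path_image g \<inter> S = {}" by blast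
  moreover have "path_image g \<inter> outside S \<noteq> {}"
    using assms(3) pathstart_in_path_image by blast
  ultimately have "path_image g \<subseteq> outside S"
    using connected_disjoint_subset_outside connected_path_image[OF assms(1)] by blast
  then show ?thesis using pathfinish_in_path_image by blast
qed simp

lemma compact_Un_inside:
  fixes S :: "'a::euclidean_space set"
  assumes "compact S"
  shows "compact (S \<union> inside S)"
proof -
  have "closed (- outside S)"
    using open_outside[OF compact_imp_closed[OF assms]] by (rule closed_Compl)
  then have "closed (S \<union> inside S)" by (simp only: union_with_inside)
  moreover have "bounded (S \<union> inside S)"
    using assms by (simp add: bounded_inside compact_imp_bounded)
  ultimately show ?thesis by (simp only: compact_eq_bounded_closed)
qed

lemma arc_has_interior_point:
  assumes "arc g"
  obtains m where "m \<in> path_image g" "m \<noteq> pathstart g" "m \<noteq> pathfinish g"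
proof
  have inj: "inj_on g {0..1}" using assms arc_def by blast
  show "g (1/2) \<noteq> pathstart g" unfolding pathstart_def
    using inj_onD[OF inj, of "1/2" 0] by auto
  show "g (1/2) \<noteq> pathfinish g" unfolding pathfinish_def
    using inj_onD[OF inj, of "1/2" 1] by auto
qed (auto simp: path_image_def)

lemma Jordan_inside_two_arcs:
  fixes c1 c2 :: "real \<Rightarrow> complex"
  assumes "arc c1" "arc c2" "pathstart c1 = x" "pathstart c2 = x"
    "pathfinish c1 = y" "pathfinish c2 = y" "path_image c1 \<inter> path_image c2 = {x, y}"
  shows "inside (path_image c1 \<union> path_image c2) \<noteq> {}"
    "connected (inside (path_image c1 \<union> path_image c2))"
    "frontier (inside (path_image c1 \<union> path_image c2)) = path_image c1 \<union> path_image c2"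
proof -
  have sp: "simple_path (c1 +++ reversepath c2)"
    using assms by (auto simp: simple_path_join_loop_eq arc_simple_path simple_path_reversepath arc_reversepath)
  have loop: "pathfinish (c1 +++ reversepath c2) = pathstart (c1 +++ reversepath c2)"
    using assms by simp
  have img: "path_image (c1 +++ reversepath c2) = path_image c1 \<union> path_image c2"
    using assms by (simp add: path_image_join)
  note J = Jordan_inside_outside[OF sp loop, unfolded img]
  show "inside (path_image c1 \<union> path_image c2) \<noteq> {}"
    "connected (inside (path_image c1 \<union> path_image c2))"
    "frontier (inside (path_image c1 \<union> path_image c2)) = path_image c1 \<union> path_image c2"
    using J by auto
qed

definition theta_curve ::
    "complex \<Rightarrow> complex \<Rightarrow> (real \<Rightarrow> complex) \<Rightarrow> (real \<Rightarrow> complex) \<Rightarrow> (real \<Rightarrow> complex) \<Rightarrow> bool" where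
  "theta_curve x y c1 c2 c3 \<longleftrightarrow> x \<noteq> y \<and>
     (\<forall>c \<in> {c1, c2, c3}. arc c \<and> pathstart c = x \<and> pathfinish c = y) \<and>
     path_image c1 \<inter> path_image c2 = {x, y} \<and> path_image c1 \<inter> path_image c3 = {x, y} \<and>
     path_image c2 \<inter> path_image c3 = {x, y}"

lemma theta_curveD:
  assumes "theta_curve x y c1 c2 c3"
  shows "x \<noteq> y" "arc c1" "arc c2" "arc c3"
    "pathstart c1 = x" "pathstart c2 = x" "pathstart c3 = x"
    "pathfinish c1 = y" "pathfinish c2 = y" "pathfinish c3 = y"
    "path_image c1 \<inter> path_image c2 = {x, y}" "path_image c1 \<inter> path_image c3 = {x, y}"
    "path_image c2 \<inter> path_image c3 = {x, y}"
  using assms by (auto simp: theta_curve_def)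

lemma theta_curve_swap23: "theta_curve x y c1 c2 c3 \<Longrightarrow> theta_curve x y c1 c3 c2"
  unfolding theta_curve_def by (auto simp: Int_commute)

lemma theta_curve_rotate: "theta_curve x y c1 c2 c3 \<Longrightarrow> theta_curve x y c2 c3 c1"
  unfolding theta_curve_def by (auto simp: Int_commute)

lemma theta_curve_Jordan:
  assumes "theta_curve x y c1 c2 c3"
  shows "inside (path_image c1 \<union> path_image c2) \<noteq> {}"
    "connected (inside (path_image c1 \<union> path_image c2))"
    "frontier (inside (path_image c1 \<union> path_image c2)) = path_image c1 \<union> path_image c2"
    "closed (path_image c1 \<union> path_image c2)"
  using assms Jordan_inside_two_arcs[of c1 c2 x y]
  by (auto simp: theta_curve_def arc_imp_path closed_path_image)

lemma theta_curve_inside_subset_outside: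
  assumes th: "theta_curve x y c1 c2 c3"
    and out3: "path_image c3 \<inter> inside (path_image c1 \<union> path_image c2) = {}"
    and out1: "path_image c1 \<inter> inside (path_image c2 \<union> path_image c3) = {}"
  shows "inside (path_image c1 \<union> path_image c2) \<subseteq> outside (path_image c2 \<union> path_image c3)"
proof (rule connected_disjoint_subset_outside)
  let ?A1 = "path_image c1" and ?A2 = "path_image c2" and ?A3 = "path_image c3"
  show "connected (inside (?A1 \<union> ?A2))"
    using theta_curve_Jordan[OF th] by simp
  show "inside (?A1 \<union> ?A2) \<inter> (?A2 \<union> ?A3) = {}"
    using out3 inside_no_overlap[of "?A1 \<union> ?A2"] by blast
  obtain m where m: "m \<in> ?A1" "m \<noteq> x" "m \<noteq> y"
    using th arc_has_interior_point[of c1] by (auto simp: theta_curve_def)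
  then have "m \<notin> ?A2 \<union> ?A3"
    using th by (auto simp: theta_curve_def)
  with m out1 have "m \<in> outside (?A2 \<union> ?A3)"
    using inside_Un_outside[of "?A2 \<union> ?A3"] by blast
  moreover have "m \<in> closure (inside (?A1 \<union> ?A2))"
    using m(1) theta_curve_Jordan(3)[OF th] frontier_def by (metis DiffD1 UnI1)
  moreover have "open (outside (?A2 \<union> ?A3))"
    using theta_curve_Jordan(4)[OF theta_curve_rotate[OF th]] by (rule open_outside)
  ultimately show "inside (?A1 \<union> ?A2) \<inter> outside (?A2 \<union> ?A3) \<noteq> {}"
    using open_Int_closure_eq_empty by blast
qed

(* Otherwise the closed discs bounded by c1 \<union> c2 and by c2 \<union> c3 meet exactly in c2, so by
   Janiszewski's theorem the complement of their union is connected; it would then lie inside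
   c1 \<union> c3 and be bounded. *)
lemma theta_curve_arc_meets_inside:
  assumes th: "theta_curve x y c1 c2 c3"
  shows "path_image c3 \<inter> inside (path_image c1 \<union> path_image c2) \<noteq> {} \<or>
    path_image c2 \<inter> inside (path_image c1 \<union> path_image c3) \<noteq> {} \<or>
    path_image c1 \<inter> inside (path_image c2 \<union> path_image c3) \<noteq> {}"
proof (rule ccontr)
  let ?A1 = "path_image c1" and ?A2 = "path_image c2" and ?A3 = "path_image c3"
  assume "\<not> ?thesis"
  then have out3: "?A3 \<inter> inside (?A1 \<union> ?A2) = {}" and out2: "?A2 \<inter> inside (?A1 \<union> ?A3) = {}"
    and out1: "?A1 \<inter> inside (?A2 \<union> ?A3) = {}" by auto
  have in12: "inside (?A1 \<union> ?A2) \<subseteq> outside (?A2 \<union> ?A3)"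
    using theta_curve_inside_subset_outside[OF th out3 out1] .
  have in13: "inside (?A1 \<union> ?A3) \<subseteq> outside (?A1 \<union> ?A2) \<inter> outside (?A2 \<union> ?A3)"
    using theta_curve_inside_subset_outside[OF theta_curve_rotate[OF theta_curve_rotate[OF th]]]
      theta_curve_inside_subset_outside[OF theta_curve_swap23[OF th]] out1 out2 out3
    by (simp add: Un_commute)
  have arcs: "arc c1" "arc c2" "arc c3" and meet: "?A1 \<inter> ?A3 \<subseteq> ?A2"
    using th pathstart_in_path_image pathfinish_in_path_image by (auto simp: theta_curve_def)
  define S where "S = ?A1 \<union> ?A2 \<union> inside (?A1 \<union> ?A2)"
  define T where "T = ?A2 \<union> ?A3 \<union> inside (?A2 \<union> ?A3)"
  have "compact S" "compact T"
    unfolding S_def T_def using arcs by (auto intro!: compact_Un_inside simp: compact_arc_image)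
  have S_compl: "- S = outside (?A1 \<union> ?A2)" and T_compl: "- T = outside (?A2 \<union> ?A3)"
    unfolding S_def T_def by (simp_all add: union_with_inside)
  have "S \<inter> T = ?A2"
    using in12 out1 meet unfolding S_def T_def
    using inside_Int_outside[of "?A2 \<union> ?A3"] union_with_inside[of "?A2 \<union> ?A3"] by blast
  moreover have "connected (- S)" "connected (- T)"
    unfolding S_compl T_compl using arcs
    by (auto intro!: connected_outside simp: compact_imp_bounded compact_arc_image)
  ultimately have "connected (- (S \<union> T))"
    using Janiszewski_connected[OF \<open>compact S\<close> compact_imp_closed[OF \<open>compact T\<close>]]
      connected_arc_image[OF arcs(2)] by simp
  moreover have "- (S \<union> T) \<inter> (?A1 \<union> ?A3) = {}"
    unfolding S_def T_def by blast
  moreover have "- (S \<union> T) \<inter> inside (?A1 \<union> ?A3) \<noteq> {}"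
    using in13 S_compl T_compl theta_curve_Jordan(1)[OF theta_curve_swap23[OF th]] by blast
  ultimately have "- (S \<union> T) \<subseteq> inside (?A1 \<union> ?A3)"
    by (rule connected_disjoint_subset_inside)
  then have "bounded (- (S \<union> T))"
    using arcs bounded_inside bounded_subset compact_arc_image compact_imp_bounded by (metis bounded_Un)
  moreover have "bounded (S \<union> T)"
    using \<open>compact S\<close> \<open>compact T\<close> compact_imp_bounded by auto
  ultimately show False
    using not_bounded_UNIV[where 'a=complex] by (metis Compl_partition bounded_Un)
qed

(* The faces are inside c1 \<union> c3, inside c2 \<union> c3 and outside c1 \<union> c2, and the closure of
   each of them misses one of b1, b2, b3. *)
lemma theta_curve_no_tripod_aux:
  assumes th: "theta_curve x y c1 c2 c3"
    and meets: "path_image c3 \<inter> inside (path_image c1 \<union> path_image c2) \<noteq> {}"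
    and b: "b1 \<in> path_image c1 - {x, y}" "b2 \<in> path_image c2 - {x, y}" "b3 \<in> path_image c3 - {x, y}"
    and Q: "path Q1" "path Q2" "path Q3"
      "pathstart Q1 = q" "pathstart Q2 = q" "pathstart Q3 = q"
      "pathfinish Q1 = b1" "pathfinish Q2 = b2" "pathfinish Q3 = b3"
    and avoid: "path_image Q1 \<inter> (path_image c1 \<union> path_image c2 \<union> path_image c3) \<subseteq> {b1}"
      "path_image Q2 \<inter> (path_image c1 \<union> path_image c2 \<union> path_image c3) \<subseteq> {b2}"
      "path_image Q3 \<inter> (path_image c1 \<union> path_image c2 \<union> path_image c3) \<subseteq> {b3}"
  shows False
proof -
  let ?A1 = "path_image c1" and ?A2 = "path_image c2" and ?A3 = "path_image c3"
  note D = theta_curveD[OF th]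
  obtain faces: "inside (?A1 \<union> ?A3) \<union> inside (?A2 \<union> ?A3) \<union> (?A3 - {x, y}) = inside (?A1 \<union> ?A2)"
    using split_inside_simple_closed_curve[OF arc_imp_simple_path[OF D(2)] D(5,8)
        arc_imp_simple_path[OF D(3)] D(6,9) arc_imp_simple_path[OF D(4)] D(7,10) D(1,11,12,13) meets]
    by blast
  have b_only: "b1 \<notin> ?A2 \<union> ?A3" "b2 \<notin> ?A1 \<union> ?A3" "b3 \<notin> ?A1 \<union> ?A2"
    using th b by (auto simp: theta_curve_def)
  have "q \<in> path_image Q1" "q \<in> path_image Q2"
    using Q(4,5) pathstart_in_path_image by metis+
  then have "q \<notin> ?A1 \<union> ?A2 \<union> ?A3"
    using avoid(1,2) b_only by blast
  then consider "q \<in> inside (?A1 \<union> ?A3)" | "q \<in> inside (?A2 \<union> ?A3)" | "q \<in> outside (?A1 \<union> ?A2)"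
    using faces inside_Un_outside[of "?A1 \<union> ?A2"] by blast
  then show False
  proof cases
    case 1
    then have "b2 \<in> ?A1 \<union> ?A3 \<union> inside (?A1 \<union> ?A3)"
      using pathfinish_in_Un_inside[of Q2 "?A1 \<union> ?A3"] Q avoid(2) by auto
    then show False
      using b_only faces inside_no_overlap[of "?A1 \<union> ?A2"] b(2) by blast
  next
    case 2
    then have "b1 \<in> ?A2 \<union> ?A3 \<union> inside (?A2 \<union> ?A3)"
      using pathfinish_in_Un_inside[of Q1 "?A2 \<union> ?A3"] Q avoid(1) by auto
    then show False
      using b_only faces inside_no_overlap[of "?A1 \<union> ?A2"] b(1) by blast
  next
    case 3
    then have "b3 \<in> ?A1 \<union> ?A2 \<union> outside (?A1 \<union> ?A2)"
      using pathfinish_in_Un_outside[of Q3 "?A1 \<union> ?A2"] Q avoid(3) by auto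
    then show False
      using b_only faces inside_Int_outside[of "?A1 \<union> ?A2"] b(3) by blast
  qed
qed

lemma theta_curve_no_tripod:
  assumes th: "theta_curve x y c1 c2 c3"
    and b: "b1 \<in> path_image c1 - {x, y}" "b2 \<in> path_image c2 - {x, y}" "b3 \<in> path_image c3 - {x, y}"
    and Q: "path Q1" "path Q2" "path Q3"
      "pathstart Q1 = q" "pathstart Q2 = q" "pathstart Q3 = q"
      "pathfinish Q1 = b1" "pathfinish Q2 = b2" "pathfinish Q3 = b3"
    and avoid: "path_image Q1 \<inter> (path_image c1 \<union> path_image c2 \<union> path_image c3) \<subseteq> {b1}"
      "path_image Q2 \<inter> (path_image c1 \<union> path_image c2 \<union> path_image c3) \<subseteq> {b2}"
      "path_image Q3 \<inter> (path_image c1 \<union> path_image c2 \<union> path_image c3) \<subseteq> {b3}"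
  shows False
  using theta_curve_arc_meets_inside[OF th]
proof (elim disjE)
  assume "path_image c3 \<inter> inside (path_image c1 \<union> path_image c2) \<noteq> {}"
  then show False
    by (rule theta_curve_no_tripod_aux[OF th _ b Q avoid])
next
  assume "path_image c2 \<inter> inside (path_image c1 \<union> path_image c3) \<noteq> {}"
  then show False
    by (rule theta_curve_no_tripod_aux[OF theta_curve_swap23[OF th] _ b(1,3,2) Q(1,3,2,4,6,5,7,9,8)])
      (use avoid in auto)
next
  assume "path_image c1 \<inter> inside (path_image c2 \<union> path_image c3) \<noteq> {}"
  then show False
    by (rule theta_curve_no_tripod_aux[OF theta_curve_rotate[OF th] _ b(2,3,1) Q(2,3,1,5,6,4,8,9,7)])
      (use avoid in auto)
qed

lemma arc_join_reversepath:
  assumes "arc c1" "arc c2" "pathfinish c1 = pathfinish c2"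
    "path_image c1 \<inter> path_image c2 = {pathfinish c1}"
  shows "arc (c1 +++ reversepath c2)"
    "path_image (c1 +++ reversepath c2) = path_image c1 \<union> path_image c2"
  using assms by (auto simp: arc_join_eq path_image_join arc_reversepath)

lemma K33_arcs_not_planar:
  fixes p :: "'i \<Rightarrow> complex" and q :: "'j \<Rightarrow> complex" and g :: "'i \<Rightarrow> 'j \<Rightarrow> real \<Rightarrow> complex"
  assumes "card A = 3" "card B = 3"
    and arcs: "\<And>a b. a \<in> A \<Longrightarrow> b \<in> B \<Longrightarrow>
      arc (g a b) \<and> pathstart (g a b) = p a \<and> pathfinish (g a b) = q b"
    and meet_same: "\<And>a b b'. a \<in> A \<Longrightarrow> b \<in> B \<Longrightarrow> b' \<in> B \<Longrightarrow> b \<noteq> b' \<Longrightarrow>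
      path_image (g a b) \<inter> path_image (g a b') = {p a}"
    and meet_other: "\<And>a a' b b'. a \<in> A \<Longrightarrow> a' \<in> A \<Longrightarrow> a \<noteq> a' \<Longrightarrow> b \<in> B \<Longrightarrow> b' \<in> B \<Longrightarrow>
      path_image (g a b) \<inter> path_image (g a' b') = (if b = b' then {q b} else {})"
  shows False
proof -
  obtain a0 a1 a2 where A: "A = {a0, a1, a2}" "a0 \<noteq> a1" "a1 \<noteq> a2" "a0 \<noteq> a2"
    using \<open>card A = 3\<close> by (auto simp: card_3_iff)
  obtain b0 b1 b2 where B: "B = {b0, b1, b2}" "b0 \<noteq> b1" "b1 \<noteq> b2" "b0 \<noteq> b2"
    using \<open>card B = 3\<close> by (auto simp: card_3_iff)
  have ends: "p a \<in> path_image (g a b)" "q b \<in> path_image (g a b)" "q b \<noteq> p a"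
    if "a \<in> A" "b \<in> B" for a b
    using arcs[OF that] arc_distinct_ends[of "g a b"] pathstart_in_path_image pathfinish_in_path_image
    by metis+
  define P where "P b = g a0 b +++ reversepath (g a1 b)" for b
  \<comment> \<open>The paths P b form a theta curve, and a2 is joined by g a2 b to an interior point of each.\<close>
  have P: "arc (P b)" "pathstart (P b) = p a0" "pathfinish (P b) = p a1"
    "path_image (P b) = path_image (g a0 b) \<union> path_image (g a1 b)" if "b \<in> B" for b
    using arc_join_reversepath[of "g a0 b" "g a1 b"] arcs[of a0 b] arcs[of a1 b]
      meet_other[of a0 a1 b b] that A
    unfolding P_def by auto
  have "path_image (P b) \<inter> path_image (P b') = {p a0, p a1}"
    if "b \<in> B" "b' \<in> B" "b \<noteq> b'" for b b'
    using P(4)[OF that(1)] P(4)[OF that(2)] meet_same[of a0 b b'] meet_same[of a1 b b']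
      meet_other[of a0 a1 b b'] meet_other[of a1 a0 b b'] that A
    by auto
  moreover have "p a0 \<noteq> p a1"
    using meet_other[of a0 a1 b0 b1] ends(1)[of a0 b0] ends(1)[of a1 b1] A B by auto
  ultimately have theta: "theta_curve (p a0) (p a1) (P b0) (P b1) (P b2)"
    using P B by (simp add: theta_curve_def)
  have tip: "q b \<in> path_image (P b) - {p a0, p a1}" if "b \<in> B" for b
    using P(4)[OF that] ends[of a0 b] ends[of a1 b] that A by auto
  have spoke: "path_image (g a2 b) \<inter> (path_image (P b0) \<union> path_image (P b1) \<union> path_image (P b2))
      \<subseteq> {q b}" if "b \<in> B" for b
  proof -
    have "path_image (g a2 b) \<inter> path_image (g a b') \<subseteq> {q b}" if "a \<in> {a0, a1}" "b' \<in> B" for a b'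
      using meet_other[of a2 a b b'] \<open>b \<in> B\<close> that A by (auto split: if_splits)
    then show ?thesis
      using P(4) B by auto
  qed
  show False
    by (rule theta_curve_no_tripod[OF theta tip[of b0] tip[of b1] tip[of b2]
          _ _ _ _ _ _ _ _ _ spoke[of b0] spoke[of b1] spoke[of b2]])
      (use arcs A B arc_imp_path in auto)
qed

lemma drawing_edge_arc:
  assumes "drawing V E pos \<Gamma>" "{u, v} \<in> E"
  shows "\<exists>g. arc g \<and> pathstart g = pos u \<and> pathfinish g = pos v \<and>
    path_image g = path_image (\<Gamma> {u, v})"
proof -
  let ?c = "\<Gamma> {u, v}"
  have "arc ?c" and ends: "{pathstart ?c, pathfinish ?c} = {pos u, pos v}"
    using assms unfolding drawing_def by auto
  moreover have "pathstart ?c \<noteq> pathfinish ?c"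
    using arc_distinct_ends[OF \<open>arc ?c\<close>] by simp
  ultimately consider "pathstart ?c = pos u" "pathfinish ?c = pos v"
    | "pathstart (reversepath ?c) = pos u" "pathfinish (reversepath ?c) = pos v"
    by (auto simp: doubleton_eq_iff)
  then show ?thesis
    using \<open>arc ?c\<close> arc_reversepath path_image_reversepath by metis
qed

lemma drawing_path_image_edge:
  assumes "drawing V E pos \<Gamma>" "e \<in> E"
  shows "path_image (\<Gamma> e) = edge_int \<Gamma> e \<union> pos ` e"
proof -
  have "{0..1::real} = {0<..<1} \<union> {0, 1}" by auto
  then have "path_image (\<Gamma> e) = edge_int \<Gamma> e \<union> {pathstart (\<Gamma> e), pathfinish (\<Gamma> e)}"
    by (auto simp: path_image_def pathstart_def pathfinish_def edge_int_def)
  then show ?thesis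
    using assms unfolding drawing_def by auto
qed

lemma drawing_uncrossed_edges_meet:
  assumes d: "drawing V E pos \<Gamma>" and "e \<in> E" "f \<in> E" "e \<noteq> f" "\<not> crosses \<Gamma> e f"
    and "e \<subseteq> V" "f \<subseteq> V"
  shows "path_image (\<Gamma> e) \<inter> path_image (\<Gamma> f) = pos ` (e \<inter> f)"
proof -
  have split: "(I \<union> P) \<inter> (J \<union> Q) = P \<inter> Q"
    if "I \<inter> J = {}" "W \<inter> I = {}" "W \<inter> J = {}" "P \<subseteq> W" "Q \<subseteq> W" for I J P Q W :: "complex set"
    using that by blast
  have "edge_int \<Gamma> e \<inter> edge_int \<Gamma> f = {}"
    using assms unfolding crosses_def by blast
  moreover have "pos ` V \<inter> edge_int \<Gamma> e = {}" "pos ` V \<inter> edge_int \<Gamma> f = {}"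
    using d \<open>e \<in> E\<close> \<open>f \<in> E\<close> unfolding drawing_def by blast+
  moreover have "pos ` e \<subseteq> pos ` V" "pos ` f \<subseteq> pos ` V"
    using \<open>e \<subseteq> V\<close> \<open>f \<subseteq> V\<close> by (simp_all add: image_mono)
  ultimately have "path_image (\<Gamma> e) \<inter> path_image (\<Gamma> f) = pos ` e \<inter> pos ` f"
    unfolding drawing_path_image_edge[OF d \<open>e \<in> E\<close>] drawing_path_image_edge[OF d \<open>f \<in> E\<close>]
    by (rule split)
  moreover have "inj_on pos V"
    using d unfolding drawing_def by blast
  then have "pos ` (e \<inter> f) = pos ` e \<inter> pos ` f"
    using \<open>e \<subseteq> V\<close> \<open>f \<subseteq> V\<close> by (rule inj_on_image_Int)
  ultimately show ?thesis by simp
qed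

lemma K33_no_crossing_free_drawing:
  assumes d: "drawing V E pos \<Gamma>" and "A \<subseteq> V" "B \<subseteq> V" "A \<inter> B = {}" "card A = 3" "card B = 3"
    and edges: "\<And>a b. a \<in> A \<Longrightarrow> b \<in> B \<Longrightarrow> {a, b} \<in> E"
    and uncrossed: "\<And>a b a' b'. a \<in> A \<Longrightarrow> b \<in> B \<Longrightarrow> a' \<in> A \<Longrightarrow> b' \<in> B \<Longrightarrow>
      \<not> crosses \<Gamma> {a, b} {a', b'}"
  shows False
proof -
  define g where "g a b = (SOME c. arc c \<and> pathstart c = pos a \<and> pathfinish c = pos b \<and>
      path_image c = path_image (\<Gamma> {a, b}))" for a b
  have g: "arc (g a b) \<and> pathstart (g a b) = pos a \<and> pathfinish (g a b) = pos b \<and>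
      path_image (g a b) = path_image (\<Gamma> {a, b})" if "a \<in> A" "b \<in> B" for a b
    unfolding g_def by (rule someI_ex[OF drawing_edge_arc[OF d edges[OF that]]])
  have meet: "path_image (g a b) \<inter> path_image (g a' b') = pos ` ({a, b} \<inter> {a', b'})"
    if "a \<in> A" "b \<in> B" "a' \<in> A" "b' \<in> B" "(a, b) \<noteq> (a', b')" for a b a' b'
  proof -
    have "{a, b} \<noteq> {a', b'}"
      using that \<open>A \<inter> B = {}\<close> by (auto simp: doubleton_eq_iff)
    moreover have "{a, b} \<subseteq> V" "{a', b'} \<subseteq> V"
      using that \<open>A \<subseteq> V\<close> \<open>B \<subseteq> V\<close> by auto
    ultimately have "path_image (\<Gamma> {a, b}) \<inter> path_image (\<Gamma> {a', b'}) = pos ` ({a, b} \<inter> {a', b'})"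
      by (intro drawing_uncrossed_edges_meet[OF d edges[OF that(1,2)] edges[OF that(3,4)] _
            uncrossed[OF that(1-4)]])
    then show ?thesis
      using g[OF that(1,2)] g[OF that(3,4)] by simp
  qed
  show False
  proof (rule K33_arcs_not_planar[of A B g pos pos])
    show "path_image (g a b) \<inter> path_image (g a b') = {pos a}"
      if "a \<in> A" "b \<in> B" "b' \<in> B" "b \<noteq> b'" for a b b'
    proof -
      have "{a, b} \<inter> {a, b'} = {a}"
        using that \<open>A \<inter> B = {}\<close> by auto
      then show ?thesis
        using meet[of a b a b'] that by simp
    qed
    show "path_image (g a b) \<inter> path_image (g a' b') = (if b = b' then {pos b} else {})"
      if "a \<in> A" "a' \<in> A" "a \<noteq> a'" "b \<in> B" "b' \<in> B" for a a' b b'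
    proof -
      have "{a, b} \<inter> {a', b'} = (if b = b' then {b} else {})"
        using that \<open>A \<inter> B = {}\<close> by auto
      then show ?thesis
        using meet[of a b a' b'] that by simp
    qed
  qed (use assms g in auto)
qed

definition crossing_pairs_disjoint :: "'v set set \<Rightarrow> ('v set \<Rightarrow> real \<Rightarrow> complex) \<Rightarrow> bool" where
  "crossing_pairs_disjoint E \<Gamma> \<longleftrightarrow> (\<forall>e1\<in>E. \<forall>f1\<in>E. \<forall>e2\<in>E. \<forall>f2\<in>E.
     crosses \<Gamma> e1 f1 \<and> crosses \<Gamma> e2 f2 \<and> {e1, f1} \<noteq> {e2, f2} \<longrightarrow> (e1 \<union> f1) \<inter> (e2 \<union> f2) = {})"

lemma class_C0_iff:
  "class_C0 V E \<longleftrightarrow> (\<exists>pos \<Gamma>. one_planar_drawing V E pos \<Gamma> \<and> crossing_pairs_disjoint E \<Gamma>)"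
  unfolding class_C0_def crossing_pairs_disjoint_def ..

lemma crossing_pairs_disjointD:
  assumes "crossing_pairs_disjoint E \<Gamma>" "e1 \<in> E" "f1 \<in> E" "e2 \<in> E" "f2 \<in> E"
    "crosses \<Gamma> e1 f1" "crosses \<Gamma> e2 f2" "{e1, f1} \<noteq> {e2, f2}"
  shows "(e1 \<union> f1) \<inter> (e2 \<union> f2) = {}"
  using assms unfolding crossing_pairs_disjoint_def by blast

lemma one_planar_drawing_crosses_disjoint:
  assumes "one_planar_drawing V E pos \<Gamma>" "e \<in> E" "f \<in> E" "crosses \<Gamma> e f"
  shows "e \<inter> f = {}"
  using assms unfolding one_planar_drawing_def crosses_def by blast

lemma bipartite_crossings_through_one_vertex:
  assumes pairs: "crossing_pairs_disjoint E \<Gamma>"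
    and adjacent: "\<And>e f. e \<in> E \<Longrightarrow> f \<in> E \<Longrightarrow> crosses \<Gamma> e f \<Longrightarrow> e \<inter> f = {}"
    and edges: "\<And>a b. a \<in> X \<Longrightarrow> b \<in> Y \<Longrightarrow> {a, b} \<in> E"
    and "X \<inter> Y = {}" "X \<noteq> {}" "finite Y" "card Y \<le> 3"
  shows "\<exists>x0\<in>X. \<forall>a\<in>X - {x0}. \<forall>b\<in>Y. \<forall>a'\<in>X - {x0}. \<forall>b'\<in>Y.
    \<not> crosses \<Gamma> {a, b} {a', b'}"
proof (cases "\<exists>a1\<in>X. \<exists>b1\<in>Y. \<exists>a2\<in>X. \<exists>b2\<in>Y. crosses \<Gamma> {a1, b1} {a2, b2}")
  case True
  then obtain a1 b1 a2 b2 where first: "a1 \<in> X" "b1 \<in> Y" "a2 \<in> X" "b2 \<in> Y"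
    "crosses \<Gamma> {a1, b1} {a2, b2}" by blast
  show ?thesis
  proof (intro bexI[OF _ \<open>a1 \<in> X\<close>] ballI notI)
    fix a b a' b'
    assume second: "a \<in> X - {a1}" "b \<in> Y" "a' \<in> X - {a1}" "b' \<in> Y"
      "crosses \<Gamma> {a, b} {a', b'}"
    have "a \<in> X" "a' \<in> X"
      using second by auto
    have "a1 \<notin> {a, b} \<union> {a', b'}"
      using second \<open>a1 \<in> X\<close> \<open>X \<inter> Y = {}\<close> by blast
    then have "{a1, b1} \<notin> {{a, b}, {a', b'}}"
      by blast
    then have "{{a1, b1}, {a2, b2}} \<noteq> {{a, b}, {a', b'}}"
      by (metis insertI1)
    then have "({a1, b1} \<union> {a2, b2}) \<inter> ({a, b} \<union> {a', b'}) = {}"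
      by (rule crossing_pairs_disjointD[OF pairs edges[OF first(1,2)] edges[OF first(3,4)]
            edges[OF \<open>a \<in> X\<close> second(2)] edges[OF \<open>a' \<in> X\<close> second(4)] first(5) second(5)])
    then have "b1 \<notin> {b, b'}" "b2 \<notin> {b, b'}"
      by blast+
    moreover have "b1 \<noteq> b2" "b \<noteq> b'"
      using adjacent[OF edges[OF first(1,2)] edges[OF first(3,4)] first(5)]
        adjacent[OF edges[OF \<open>a \<in> X\<close> second(2)] edges[OF \<open>a' \<in> X\<close> second(4)] second(5)]
      by blast+
    ultimately have "card {b1, b2, b, b'} = 4"
      by simp
    moreover have "card {b1, b2, b, b'} \<le> card Y"
      using first second \<open>finite Y\<close> by (intro card_mono) auto
    ultimately show False
      using \<open>card Y \<le> 3\<close> by simp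
  qed
next
  case False
  then show ?thesis
    using \<open>X \<noteq> {}\<close> by blast
qed

lemma K43_no_C0_drawing:
  assumes opd: "one_planar_drawing V E pos \<Gamma>" and pairs: "crossing_pairs_disjoint E \<Gamma>"
    and "X \<subseteq> V" "Y \<subseteq> V" "X \<inter> Y = {}" "card X = 4" "card Y = 3"
    and edges: "\<And>a b. a \<in> X \<Longrightarrow> b \<in> Y \<Longrightarrow> {a, b} \<in> E"
  shows False
proof -
  have "X \<noteq> {}" "finite Y"
    using \<open>card X = 4\<close> \<open>card Y = 3\<close> by (auto simp: card_ge_0_finite)
  with \<open>X \<inter> Y = {}\<close> \<open>card Y = 3\<close> have "\<exists>x0\<in>X. \<forall>a\<in>X - {x0}. \<forall>b\<in>Y. \<forall>a'\<in>X - {x0}. \<forall>b'\<in>Y.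
      \<not> crosses \<Gamma> {a, b} {a', b'}"
    by (intro bipartite_crossings_through_one_vertex[OF pairs
          one_planar_drawing_crosses_disjoint[OF opd] edges]) simp_all
  then obtain x0 where "x0 \<in> X" and uncrossed: "\<forall>a\<in>X - {x0}. \<forall>b\<in>Y. \<forall>a'\<in>X - {x0}. \<forall>b'\<in>Y.
      \<not> crosses \<Gamma> {a, b} {a', b'}"
    by (rule bexE)
  have drawing: "drawing V E pos \<Gamma>"
    using opd unfolding one_planar_drawing_def by blast
  have smaller: "X - {x0} \<subseteq> V" "(X - {x0}) \<inter> Y = {}" "card (X - {x0}) = 3"
    using assms(3,5,6) \<open>x0 \<in> X\<close> by (auto simp: card_Diff_singleton)
  show False
    by (rule K33_no_crossing_free_drawing[OF drawing smaller(1) \<open>Y \<subseteq> V\<close> smaller(2,3)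
          \<open>card Y = 3\<close> edges[OF DiffD1] uncrossed[rule_format]])
qed

theorem lemma10:
  fixes VG :: "'a set" and EG :: "'a set set" and VH :: "'b set" and EH :: "'b set set"
  assumes "simple_graph VG EG" and "simple_graph VH EH"
    and "card VG = 4" and "card VH = 3"
  shows "\<not> class_C0 (join_V VG VH) (join_E VG EG VH EH)"
proof
  assume "class_C0 (join_V VG VH) (join_E VG EG VH EH)"
  then obtain pos \<Gamma> where "one_planar_drawing (join_V VG VH) (join_E VG EG VH EH) pos \<Gamma>"
    and "crossing_pairs_disjoint (join_E VG EG VH EH) \<Gamma>"
    unfolding class_C0_iff by blast
  then show False
  proof (rule K43_no_C0_drawing)
    show "Inl ` VG \<subseteq> join_V VG VH" "Inr ` VH \<subseteq> join_V VG VH" "Inl ` VG \<inter> Inr ` VH = {}"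
      unfolding join_V_def by auto
    show "card (Inl ` VG) = 4" "card (Inr ` VH) = 3"
      using assms(3,4) by (simp_all add: card_image)
    show "{a, b} \<in> join_E VG EG VH EH" if "a \<in> Inl ` VG" "b \<in> Inr ` VH" for a b
      using that unfolding join_E_def by blast
  qed
qed

end
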